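(* Let $n\ge1$ and let $\mathfrak{h}$ be the complex vector space with basis $\{\beta^1,\dots,\beta^n,\alpha^1,\dots,\alpha^n\}$ and symmetric bilinear form with $(\beta^i,\beta^j)=\delta_{ij}$, $(\alpha^i,\alpha^j)=\delta_{ij}$, $(\beta^i,\alpha^j)=0$. Let $M(1)$ be the Heisenberg vertex operator algebra associated with $\mathfrak{h}$, and identify the commutative associative algebra $M(1)/C_2(M(1))$ with $\mathbb{C}[\zeta_1,\dots,\zeta_n,x_1,\dots,x_n]$ via $\alpha^i(-1)\mathbf{1}+C_2(M(1))\mapsto\zeta_i$, $\beta^i(-1)\mathbf{1}+C_2(M(1))\mapsto x_i$. For $i\in\{1,\dots,n\}$ define the linear map $f_i:M(1)\to M(1)$, $f_i(a)=\beta^i(1)a-\alpha^i(-1)a$. Then for $1\le k\le n$, the subspace $\sum_{i=1}^{k}f_i(M(1))+C_2(M(1))$ is an $MZ_{0,-1}$-subspace of $M(1)$ if and only if $\sum_{i=1}^{k}(\partial_{x_i}-\zeta_i)\mathbb{C}[\zeta_1,\dots,\zeta_n,x_1,\dots,x_n]$ is a Mathieu-Zhao subspace of $\mathbb{C}[\zeta_1,\dots,\zeta_n,x_1,\dots,x_n]$.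
   Context: Heisenberg VOA: for $\mathfrak{h}$ with nondegenerate symmetric form, $\hat{\mathfrak{h}}=\mathfrak{h}\otimes\mathbb{C}[t,t^{-1}]\oplus\mathbb{C}c$ with $[x\otimes t^m,y\otimes t^{p}]=(x,y)m\delta_{m+p,0}c$, $c$ central; $M(1)=U(\hat{\mathfrak{h}})\otimes_{U(\mathfrak{h}\otimes\mathbb{C}[t]\oplus\mathbb{C}c)}\mathbb{C}$ ($\mathfrak{h}\otimes\mathbb{C}[t]$ acting by $0$, $c$ by $1$), $\alpha(m)$ denotes the action of $\alpha\otimes t^m$, and $Y(\alpha(-1)\mathbf{1},z)=\sum_m\alpha(m)z^{-m-1}$, with vertex operators of general elements given by normal-ordered products; vacuum $\mathbf{1}=1\otimes1$. In particular $(\alpha(-1)\mathbf{1})_m=\alpha(m)$. $C_2(V)=\operatorname{span}\{u_{-2}v\}$, and $V/C_2(V)$ is a commutative associative algebra with product $(a+C_2)(b+C_2)=a_{-1}b+C_2$. Iterated products are nested to the right. For a subspace $M\subseteq V$ of a vertex algebra: $r_{0,-1}(M)$ is the set of $v$ for which there is $m\ge 0$ with $v_{n_1}\cdots v_{n_t}v\in M$ for all $t\ge m$, $n_i\in\{0,-1\}$; $lsr_{0,-1}(M)$ is the set of $v$ such that for every $b\in V$ there is $m\ge0$ with $b_sv_{n_1}\cdots v_{n_t}v\in M$ for all $t\ge m$, $s,n_i\in\{0,-1\}$; $rsr_{0,-1}(M)$ is the set of $v$ such that for every $w\in V$ there is $m\ge0$ with $(v_{n_1}\cdots v_{n_t}v)_sw\in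 M$ for all $t\ge m$, $s,n_i\in\{0,-1\}$; $sr_{0,-1}=lsr_{0,-1}\cap rsr_{0,-1}$; $M$ is an $MZ_{0,-1}$-subspace if $r_{0,-1}(M)=sr_{0,-1}(M)$. For a commutative associative unital algebra $A$ and a subspace $U$: $r(U)=\{a:\exists m\ge1,\ a^t\in U\ \forall t\ge m\}$, $sr(U)=\{a:\forall b,c\in A\ \exists m\ge1,\ ba^tc\in U\ \forall t\ge m\}$; $U$ is Mathieu-Zhao if $r(U)=sr(U)$. *)

theory Defs
  imports Complex_Main "HOL-Library.Poly_Mapping"
begin

type_synonym 'v cpoly = "('v \<Rightarrow>\<^sub>0 nat) \<Rightarrow>\<^sub>0 complex"

definition cconst :: "complex \<Rightarrow> 'v cpoly" where
  "cconst c = Poly_Mapping.single 0 c"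

definition cvar :: "'v \<Rightarrow> 'v cpoly" where
  "cvar v = Poly_Mapping.single (Poly_Mapping.single v 1) 1"

definition cpderiv :: "'v \<Rightarrow> 'v cpoly \<Rightarrow> 'v cpoly" where
  "cpderiv v p = (\<Sum>mu\<in>Poly_Mapping.keys p.
      Poly_Mapping.single (mu - Poly_Mapping.single v 1)
        (of_nat (Poly_Mapping.lookup mu v) * (Poly_Mapping.lookup p mu :: complex)))"

definition poly_in :: "'v set \<Rightarrow> 'v cpoly set" where
  "poly_in X = {p. \<forall>mu\<in>Poly_Mapping.keys p. Poly_Mapping.keys mu \<subseteq> X}"

text \<open>A sum over all indices with nonzero summand (used for sums that are
  finite when applied to a vector).\<close>
definition fsum :: "(nat \<Rightarrow> 'a::comm_monoid_add) \<Rightarrow> 'a" where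
  "fsum f = (\<Sum>j\<in>{j. f j \<noteq> 0}. f j)"

text \<open>We fix an orthonormal basis h_0,...,h_{N-1} of the space h (here
  N = 2n).  As a vector space M(1) is the polynomial algebra in the variables
  (j,k), where the variable (j,k) stands for h_j(-(k+1)); the vacuum is the
  constant polynomial 1.  Thus vectors of M(1) are the elements of type
  (nat * nat) cpoly whose variables (j,k) all satisfy j < N.\<close>

type_synonym heis = "(nat \<times> nat) cpoly"

definition heis_space :: "nat \<Rightarrow> heis set" where
  "heis_space N = poly_in {v. fst v < N}"

text \<open>The action of h_j(k) on M(1): creation (k<0) is multiplication by the
  variable; annihilation (k>0) is k times the partial derivative
  (since [h_j(k), h_j(-k)] = k); h_j(0) acts as 0.\<close>
definition hmode :: "nat \<Rightarrow> int \<Rightarrow> heis \<Rightarrow> heis" where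
  "hmode j k w =
     (if k < 0 then cvar (j, nat (-k) - 1) * w
      else if k > 0 then cconst (of_int k) * cpderiv (j, nat k - 1) w
      else 0)"

text \<open>Modes of the vertex operator of a monomial vector, via the normal ordered
  product  Y(h_j(-m)u, z) = : (1/(m-1)!) (d/dz)^(m-1) h_j(z) Y(u,z) : .
  Expanding modes, for m >= 1:
    (h_j(-m)u)_s w = sum_{l>=0} C(m+l-1,l) [ h_j(-m-l) (u_{s+l} w)
                                             - (-1)^m u_{s-m-l} (h_j(l) w) ]
  and the vacuum satisfies 1_s w = delta_{s,-1} w.  The first argument is a
  fuel equal to the degree of the monomial.\<close>
primrec monop_aux :: "nat \<Rightarrow> ((nat \<times> nat) \<Rightarrow>\<^sub>0 nat) \<Rightarrow> int \<Rightarrow> heis \<Rightarrow> heis" where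
  "monop_aux 0 mu s w = (if s = -1 then w else 0)"
| "monop_aux (Suc d) mu s w =
     (let v = (SOME v. v \<in> Poly_Mapping.keys mu); j = fst v; m = snd v + 1;
          mu' = mu - Poly_Mapping.single v 1
      in fsum (\<lambda>l. cconst (of_nat ((m + l - 1) choose l)) *
                    (hmode j (- int m - int l) (monop_aux d mu' (s + int l) w)
                     - cconst ((-1) ^ m) *
                       monop_aux d mu' (s - int m - int l) (hmode j (int l) w))))"

definition monop :: "((nat \<times> nat) \<Rightarrow>\<^sub>0 nat) \<Rightarrow> int \<Rightarrow> heis \<Rightarrow> heis" where
  "monop mu = monop_aux (\<Sum>v\<in>Poly_Mapping.keys mu. Poly_Mapping.lookup mu v) mu"

text \<open>vop u s w  =  u_s w  (the s-th mode of Y(u,z) applied to w), extended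
  linearly in u.\<close>
definition vop :: "heis \<Rightarrow> int \<Rightarrow> heis \<Rightarrow> heis" where
  "vop u s w = (\<Sum>mu\<in>Poly_Mapping.keys u. cconst (Poly_Mapping.lookup u mu) * monop mu s w)"

definition C2 :: "nat \<Rightarrow> heis set" where
  "C2 N = {(\<Sum>l<L. cconst (c l) * vop (u l) (-2) (v l)) | L c u v.
             \<forall>l<(L::nat). u l \<in> heis_space N \<and> v l \<in> heis_space N}"

definition iterp :: "heis \<Rightarrow> int list \<Rightarrow> heis" where
  "iterp v ns = foldr (\<lambda>n acc. vop v n acc) ns v"

definition r01 :: "heis set \<Rightarrow> heis set \<Rightarrow> heis set" where
  "r01 V M = {v \<in> V. \<exists>m::nat. \<forall>ns. set ns \<subseteq> {0, -1} \<and> length ns \<ge> m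
                 \<longrightarrow> iterp v ns \<in> M}"

definition lsr01 :: "heis set \<Rightarrow> heis set \<Rightarrow> heis set" where
  "lsr01 V M = {v \<in> V. \<forall>b\<in>V. \<exists>m::nat. \<forall>ns s. set ns \<subseteq> {0, -1} \<and> s \<in> {0, -1}
                 \<and> length ns \<ge> m \<longrightarrow> vop b s (iterp v ns) \<in> M}"

definition rsr01 :: "heis set \<Rightarrow> heis set \<Rightarrow> heis set" where
  "rsr01 V M = {v \<in> V. \<forall>w\<in>V. \<exists>m::nat. \<forall>ns s. set ns \<subseteq> {0, -1} \<and> s \<in> {0, -1}
                 \<and> length ns \<ge> m \<longrightarrow> vop (iterp v ns) s w \<in> M}"

definition sr01 :: "heis set \<Rightarrow> heis set \<Rightarrow> heis set" where
  "sr01 V M = lsr01 V M \<inter> rsr01 V M"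

definition MZ01_subspace :: "heis set \<Rightarrow> heis set \<Rightarrow> bool" where
  "MZ01_subspace V M \<longleftrightarrow> r01 V M = sr01 V M"

definition rad_comm :: "'a::comm_ring_1 set \<Rightarrow> 'a set \<Rightarrow> 'a set" where
  "rad_comm A U = {a \<in> A. \<exists>m::nat\<ge>1. \<forall>t\<ge>m. a ^ t \<in> U}"

definition srad_comm :: "'a::comm_ring_1 set \<Rightarrow> 'a set \<Rightarrow> 'a set" where
  "srad_comm A U = {a \<in> A. \<forall>b\<in>A. \<forall>c\<in>A. \<exists>m::nat\<ge>1. \<forall>t\<ge>m. b * a ^ t * c \<in> U}"

definition MZ_subspace :: "'a::comm_ring_1 set \<Rightarrow> 'a set \<Rightarrow> bool" where
  "MZ_subspace A U \<longleftrightarrow> rad_comm A U = srad_comm A U"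

text \<open>Basis of h (dimension 2n): beta^i is h_{i-1}, alpha^i is h_{n+i-1},
  for 1 <= i <= n.  Correspondingly the polynomial algebra
  C[zeta_1..zeta_n, x_1..x_n] has variables 0..2n-1 with x_i = variable i-1
  (image of beta^i(-1)1) and zeta_i = variable n+i-1 (image of alpha^i(-1)1).\<close>

definition beta_idx :: "nat \<Rightarrow> nat \<Rightarrow> nat" where "beta_idx n i = i - 1"
definition alpha_idx :: "nat \<Rightarrow> nat \<Rightarrow> nat" where "alpha_idx n i = n + i - 1"

definition Mone :: "nat \<Rightarrow> heis set" where "Mone n = heis_space (2 * n)"

definition fmap :: "nat \<Rightarrow> nat \<Rightarrow> heis \<Rightarrow> heis" where
  "fmap n i a = hmode (beta_idx n i) 1 a - hmode (alpha_idx n i) (-1) a"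

definition Wsub :: "nat \<Rightarrow> nat \<Rightarrow> heis set" where
  "Wsub n k = {(\<Sum>i\<in>{1..k}. fmap n i (a i)) + c | a c.
                 (\<forall>i\<in>{1..k}. a i \<in> Mone n) \<and> c \<in> C2 (2 * n)}"

definition Apoly :: "nat \<Rightarrow> nat cpoly set" where
  "Apoly n = poly_in {v. v < 2 * n}"

definition xvar :: "nat \<Rightarrow> nat \<Rightarrow> nat" where "xvar n i = beta_idx n i"
definition zetavar :: "nat \<Rightarrow> nat \<Rightarrow> nat" where "zetavar n i = alpha_idx n i"

definition Usub :: "nat \<Rightarrow> nat \<Rightarrow> nat cpoly set" where
  "Usub n k = {(\<Sum>i\<in>{1..k}. cpderiv (xvar n i) (g i) - cvar (zetavar n i) * g i) | g.
                 \<forall>i\<in>{1..k}. g i \<in> Apoly n}"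

end

theory Submission
  imports Defs
begin

text \<open>Let c2proj send a vector of M(1) to its component in the monomials in the weight-one
  generators h_j(-1), read as a polynomial in the x_i and zeta_i; this is the quotient map
  M(1) \<rightarrow> M(1)/C_2(M(1)).  In the normal ordered products defining the modes, every
  summand of u_0 w or u_s w with s \<le> -2 contains a generator h_j(-m) with m \<ge> 2, and in u_{-1} w
  only the product of the weight-one parts survives; so c2proj kills C_2 and the 0-products and
  is multiplicative on (-1)-products.  Conversely each monomial containing some h_j(-m-1),
  m \<ge> 1, equals h_j(-m)1 applied in mode -2 to the rest, so the kernel of c2proj is exactly
  C_2.  As c2proj (f_i a) = (d/dx_i - zeta_i) (c2proj a), the subspace W is the full preimage of U.
  An iterated product v_{n_1} ... v_{n_t} v with all n_i \<in> {0, -1} projects to 0 or to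
  c2proj(v)^(t+1), hence the radical and the strong radical of W are the preimages of those of U,
  and surjectivity of c2proj turns one equality into the other.\<close>

section \<open>Radicals along a multiplicative projection\<close>

lemma iterp_Nil [simp]: "iterp v [] = v"
  by (simp add: iterp_def)

lemma iterp_Cons [simp]: "iterp v (n # ns) = vop v n (iterp v ns)"
  by (simp add: iterp_def)

lemma set_replicate_minus_one: "set (replicate t (-1 :: int)) \<subseteq> {0, -1}"
  by (cases t) auto

locale multiplicative_projection =
  fixes V :: "heis set" and A :: "'a::comm_ring_1 set" and p :: "heis \<Rightarrow> 'a"
  assumes p_image: "p ` V = A"
    and vop_closed: "\<And>u w s. u \<in> V \<Longrightarrow> w \<in> V \<Longrightarrow> s \<in> {0, -1} \<Longrightarrow> vop u s w \<in> V"
    and p_vop_minus_one: "\<And>u w. u \<in> V \<Longrightarrow> w \<in> V \<Longrightarrow> p (vop u (-1) w) = p u * p w"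
    and p_vop_0: "\<And>u w. u \<in> V \<Longrightarrow> w \<in> V \<Longrightarrow> p (vop u 0 w) = 0"
    and one_mem: "1 \<in> A"
begin

lemma iterp_closed: "x \<in> V \<Longrightarrow> set ns \<subseteq> {0, -1} \<Longrightarrow> iterp x ns \<in> V"
  by (induction ns) (auto intro: vop_closed)

lemma p_iterp: "x \<in> V \<Longrightarrow> set ns \<subseteq> {0, -1} \<Longrightarrow>
    p (iterp x ns) = (if 0 \<in> set ns then 0 else p x ^ (length ns + 1))"
  by (induction ns) (auto simp: p_vop_0 p_vop_minus_one iterp_closed)

lemma p_iterp_replicate: "x \<in> V \<Longrightarrow> p (iterp x (replicate t (-1))) = p x ^ (t + 1)"
  by (subst p_iterp) auto

context
  fixes M :: "heis set" and U :: "'a set"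
  assumes preimage: "\<And>x. x \<in> V \<Longrightarrow> x \<in> M \<longleftrightarrow> p x \<in> U"
    and zero_mem: "0 \<in> U"
begin

lemma r01_eq: "r01 V M = {x \<in> V. p x \<in> rad_comm A U}"
proof (intro set_eqI iffI)
  fix x assume "x \<in> r01 V M"
  then obtain m where x: "x \<in> V" and m: "\<forall>ns. set ns \<subseteq> {0, -1} \<and> length ns \<ge> m \<longrightarrow> iterp x ns \<in> M"
    unfolding r01_def by blast
  have "p x ^ t \<in> U" if "t \<ge> Suc m" for t
    using m[rule_format, of "replicate (t - 1) (-1)"] that x iterp_closed[of x "replicate (t - 1) (-1)"]
    by (simp add: preimage p_iterp_replicate set_replicate_minus_one)
  then show "x \<in> {x \<in> V. p x \<in> rad_comm A U}"
    using x p_image unfolding rad_comm_def by (auto intro!: exI[of _ "Suc m"])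
next
  fix x assume "x \<in> {x \<in> V. p x \<in> rad_comm A U}"
  then obtain m where x: "x \<in> V" and m: "\<forall>t\<ge>m. p x ^ t \<in> U"
    unfolding rad_comm_def by blast
  have "iterp x ns \<in> M" if "set ns \<subseteq> {0, -1}" "length ns \<ge> m" for ns
    using that x m[rule_format, of "length ns + 1"] zero_mem by (simp add: preimage iterp_closed p_iterp)
  then show "x \<in> r01 V M" using x unfolding r01_def by blast
qed

text \<open>b * p x ^ t * c is the image of (u_{-1} w)_{-1} x_{-1} ... x_{-1} x
  for preimages u, w of b, c.\<close>
lemma srad_comm_of_lsr01:
  assumes "x \<in> lsr01 V M"
  shows "p x \<in> srad_comm A U"
proof -
  from assms have x: "x \<in> V" and left: "\<forall>b\<in>V. \<exists>m::nat. \<forall>ns s. set ns \<subseteq> {0, -1} \<and> s \<in> {0, -1}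
      \<and> length ns \<ge> m \<longrightarrow> vop b s (iterp x ns) \<in> M"
    unfolding lsr01_def by blast+
  have "\<exists>m\<ge>1. \<forall>t\<ge>m. b * p x ^ t * c \<in> U" if "b \<in> A" "c \<in> A" for b c
  proof -
    obtain u w where u: "u \<in> V" "p u = b" and w: "w \<in> V" "p w = c"
      using \<open>b \<in> A\<close> \<open>c \<in> A\<close> p_image by blast
    obtain m where m: "\<forall>ns s. set ns \<subseteq> {0, -1} \<and> s \<in> {0, -1} \<and> length ns \<ge> m
        \<longrightarrow> vop (vop u (-1) w) s (iterp x ns) \<in> M"
      using left vop_closed[OF u(1) w(1)] by blast
    have "b * p x ^ t * c \<in> U" if "t \<ge> Suc m" for t
    proof -
      let ?ns = "replicate (t - 1) (-1 :: int)"
      have "vop (vop u (-1) w) (-1) (iterp x ?ns) \<in> M"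
        using m[rule_format, of ?ns "-1"] that by (simp add: set_replicate_minus_one)
      moreover have "iterp x ?ns \<in> V" using x by (simp add: iterp_closed set_replicate_minus_one)
      ultimately show ?thesis
        using that u w x vop_closed by (simp add: preimage p_vop_minus_one p_iterp_replicate mult_ac)
    qed
    then show ?thesis by (intro exI[of _ "Suc m"]) auto
  qed
  then show ?thesis using x p_image unfolding srad_comm_def by blast
qed

lemma sr01_of_srad_comm:
  assumes x: "x \<in> V" and "p x \<in> srad_comm A U"
  shows "x \<in> sr01 V M"
proof -
  have bounded: "\<forall>b\<in>A. \<forall>c\<in>A. \<exists>m::nat\<ge>1. \<forall>t\<ge>m. b * p x ^ t * c \<in> U"
    using assms(2) unfolding srad_comm_def by blast
  have projected: "p (vop b s (iterp x ns)) \<in> U" "p (vop (iterp x ns) s b) \<in> U"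
    if "b \<in> V" "set ns \<subseteq> {0, -1}" "s \<in> {0, -1}" "p b * p x ^ (length ns + 1) \<in> U" for b ns s
    using that x zero_mem by (auto simp: p_vop_0 p_vop_minus_one p_iterp iterp_closed mult.commute)
  have "x \<in> lsr01 V M" "x \<in> rsr01 V M"
    unfolding lsr01_def rsr01_def
  proof (safe intro!: x)
    fix b assume b: "b \<in> V"
    then obtain m where m: "\<forall>t\<ge>m. p b * p x ^ t * 1 \<in> U"
      using bounded p_image one_mem by blast
    have "vop b s (iterp x ns) \<in> M" "vop (iterp x ns) s b \<in> M"
      if "set ns \<subseteq> {0, -1}" "s \<in> {0, -1}" "length ns \<ge> m" for ns s
    proof -
      have "p b * p x ^ (length ns + 1) \<in> U"
        using m[rule_format, of "length ns + 1"] that(3) by simp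
      then show "vop b s (iterp x ns) \<in> M" "vop (iterp x ns) s b \<in> M"
        using projected[OF b that(1,2)] b x that by (simp_all add: preimage vop_closed iterp_closed)
    qed
    then show "\<exists>m. \<forall>ns s. set ns \<subseteq> {0, -1} \<and> s \<in> {0, -1} \<and> length ns \<ge> m \<longrightarrow> vop b s (iterp x ns) \<in> M"
      "\<exists>m. \<forall>ns s. set ns \<subseteq> {0, -1} \<and> s \<in> {0, -1} \<and> length ns \<ge> m \<longrightarrow> vop (iterp x ns) s b \<in> M"
      by blast+
  qed
  then show ?thesis unfolding sr01_def by blast
qed

lemma sr01_eq: "sr01 V M = {x \<in> V. p x \<in> srad_comm A U}"
  using srad_comm_of_lsr01 sr01_of_srad_comm unfolding sr01_def lsr01_def by blast

lemma MZ01_subspace_iff_MZ_subspace: "MZ01_subspace V M \<longleftrightarrow> MZ_subspace A U"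
proof -
  have "rad_comm A U \<subseteq> A" and "srad_comm A U \<subseteq> A"
    unfolding rad_comm_def srad_comm_def by blast+
  then have "{x \<in> V. p x \<in> rad_comm A U} = {x \<in> V. p x \<in> srad_comm A U}
      \<longleftrightarrow> rad_comm A U = srad_comm A U"
    using p_image by blast
  then show ?thesis unfolding MZ01_subspace_def MZ_subspace_def r01_eq sr01_eq .
qed

end

end

lemma poly_mapping_sum_single:
  "(\<Sum>mu\<in>Poly_Mapping.keys p. Poly_Mapping.single mu (Poly_Mapping.lookup p mu)) = p"
proof (rule poly_mapping_eqI)
  fix nu
  have "Poly_Mapping.lookup (\<Sum>mu\<in>Poly_Mapping.keys p. Poly_Mapping.single mu (Poly_Mapping.lookup p mu)) nu
      = (\<Sum>mu\<in>Poly_Mapping.keys p. if mu = nu then Poly_Mapping.lookup p nu else 0)"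
    unfolding lookup_sum by (intro sum.cong) (auto simp: lookup_single when_def)
  also have "\<dots> = Poly_Mapping.lookup p nu" by (simp add: in_keys_iff)
  finally show "Poly_Mapping.lookup
      (\<Sum>mu\<in>Poly_Mapping.keys p. Poly_Mapping.single mu (Poly_Mapping.lookup p mu)) nu
      = Poly_Mapping.lookup p nu" .
qed

lemma poly_mapping_single_induct [case_names zero single add]:
  fixes p :: "'a \<Rightarrow>\<^sub>0 'b::comm_monoid_add"
  assumes "P 0" and "\<And>mu c. P (Poly_Mapping.single mu c)" and "\<And>p q. P p \<Longrightarrow> P q \<Longrightarrow> P (p + q)"
  shows "P p"
proof -
  have "P (\<Sum>mu\<in>S. Poly_Mapping.single mu (Poly_Mapping.lookup p mu))" if "finite S" for S
    using that by (induction S rule: finite_induct) (auto simp: assms)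
  then show ?thesis using poly_mapping_sum_single[of p] by (metis finite_keys)
qed

lemma monomial_minus_add_single:
  "v \<in> Poly_Mapping.keys mu \<Longrightarrow> (mu - Poly_Mapping.single v 1) + Poly_Mapping.single v (1::nat) = mu"
  by (rule poly_mapping_eqI) (auto simp: lookup_add lookup_minus lookup_single when_def in_keys_iff)

lemma keys_minus_single_subset:
  "Poly_Mapping.keys (mu - Poly_Mapping.single v (1::nat)) \<subseteq> Poly_Mapping.keys mu"
  by (auto simp: in_keys_iff lookup_minus)

lemma keys_add_monomial:
  "Poly_Mapping.keys ((a::'v \<Rightarrow>\<^sub>0 nat) + b) = Poly_Mapping.keys a \<union> Poly_Mapping.keys b"
  by (auto simp: in_keys_iff lookup_add)

lemma lookup_cpderiv:
  "Poly_Mapping.lookup (cpderiv v p) mu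
     = of_nat (Poly_Mapping.lookup mu v + 1) * Poly_Mapping.lookup p (mu + Poly_Mapping.single v 1)"
proof -
  let ?mu' = "mu + Poly_Mapping.single v 1"
  have summand: "Poly_Mapping.lookup (Poly_Mapping.single (nu - Poly_Mapping.single v 1)
                (of_nat (Poly_Mapping.lookup nu v) * Poly_Mapping.lookup p nu)) mu
            = (if nu = ?mu' then of_nat (Poly_Mapping.lookup mu v + 1) * Poly_Mapping.lookup p nu else 0)"
    for nu
  proof (cases "nu = ?mu'")
    case True
    then show ?thesis by (simp add: lookup_add)
  next
    case False
    have "Poly_Mapping.lookup nu v = 0" if "nu - Poly_Mapping.single v 1 = mu"
      using False that monomial_minus_add_single[of v nu] by (auto simp: in_keys_iff)
    then show ?thesis using False by (auto simp: lookup_single when_def)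
  qed
  have "Poly_Mapping.lookup (cpderiv v p) mu
      = (\<Sum>nu\<in>Poly_Mapping.keys p.
           if nu = ?mu' then of_nat (Poly_Mapping.lookup mu v + 1) * Poly_Mapping.lookup p nu else 0)"
    unfolding cpderiv_def lookup_sum summand ..
  also have "\<dots> = of_nat (Poly_Mapping.lookup mu v + 1) * Poly_Mapping.lookup p ?mu'"
    by (simp add: in_keys_iff)
  finally show ?thesis .
qed

lemma cpderiv_0 [simp]: "cpderiv v 0 = 0"
  by (simp add: cpderiv_def)

lemma keys_cpderiv:
  "mu \<in> Poly_Mapping.keys (cpderiv v p) \<Longrightarrow> mu + Poly_Mapping.single v 1 \<in> Poly_Mapping.keys p"
  by (simp add: in_keys_iff lookup_cpderiv)

lemma poly_in_zero [simp]: "0 \<in> poly_in X"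
  by (simp add: poly_in_def)

lemma poly_in_add: "p \<in> poly_in X \<Longrightarrow> q \<in> poly_in X \<Longrightarrow> p + q \<in> poly_in X"
  unfolding poly_in_def using keys_add[of p q] by blast

lemma poly_in_diff: "p \<in> poly_in X \<Longrightarrow> q \<in> poly_in X \<Longrightarrow> p - q \<in> poly_in X"
  unfolding poly_in_def using keys_diff[of p q] by blast

lemma poly_in_sum: "(\<And>i. i \<in> S \<Longrightarrow> f i \<in> poly_in X) \<Longrightarrow> sum f S \<in> poly_in X"
  by (induction S rule: infinite_finite_induct) (auto intro: poly_in_add)

lemma poly_in_mult: "p \<in> poly_in X \<Longrightarrow> q \<in> poly_in X \<Longrightarrow> p * q \<in> poly_in X"
  unfolding poly_in_def using keys_mult[of p q] by (force simp: keys_add_monomial)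

lemma poly_in_single: "Poly_Mapping.keys mu \<subseteq> X \<Longrightarrow> Poly_Mapping.single mu c \<in> poly_in X"
  by (simp add: poly_in_def)

lemma poly_in_cconst [simp]: "cconst c \<in> poly_in X"
  by (simp add: cconst_def poly_in_def)

lemma poly_in_one [simp]: "1 \<in> poly_in X"
  by (simp add: poly_in_def)

lemma poly_in_cvar: "v \<in> X \<Longrightarrow> cvar v \<in> poly_in X"
  by (simp add: cvar_def poly_in_def)

lemma poly_in_cpderiv: "p \<in> poly_in X \<Longrightarrow> cpderiv v p \<in> poly_in X"
  unfolding poly_in_def using keys_cpderiv[of _ v p] keys_add_monomial by fastforce

lemma cconst_mult_single: "cconst c * Poly_Mapping.single mu d = Poly_Mapping.single mu (c * d)"
  by (simp add: cconst_def mult_single)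

lemma cconst_1 [simp]: "cconst 1 = 1"
  by (simp add: cconst_def)

lemma keys_cconst_mult: "Poly_Mapping.keys (cconst c * x) \<subseteq> Poly_Mapping.keys x"
  using keys_mult[of "cconst c" x] by (auto simp: cconst_def split: if_splits)

section \<open>The projection onto the weight-one generators\<close>

definition embed_mono :: "(nat \<Rightarrow>\<^sub>0 nat) \<Rightarrow> ((nat \<times> nat) \<Rightarrow>\<^sub>0 nat)" where
  "embed_mono nu = Abs_poly_mapping (\<lambda>(j, k). Poly_Mapping.lookup nu j when k = 0)"

lemma lookup_embed_mono [simp]:
  "Poly_Mapping.lookup (embed_mono nu) (j, k) = (Poly_Mapping.lookup nu j when k = 0)"
proof -
  let ?f = "\<lambda>(j, k::nat). Poly_Mapping.lookup nu j when k = 0"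
  have "{v. ?f v \<noteq> 0} \<subseteq> Poly_Mapping.keys nu \<times> {0}"
    by (auto simp: in_keys_iff when_def split: if_splits)
  then have "finite {v. ?f v \<noteq> 0}"
    by (rule finite_subset) simp
  then have "Poly_Mapping.lookup (Abs_poly_mapping ?f) = ?f"
    by (rule lookup_Abs_poly_mapping)
  then show ?thesis by (simp add: embed_mono_def)
qed

lemma inj_embed_mono: "inj embed_mono"
proof (rule injI)
  fix a b assume "embed_mono a = embed_mono b"
  then have "Poly_Mapping.lookup (embed_mono a) (j, 0) = Poly_Mapping.lookup (embed_mono b) (j, 0)" for j
    by simp
  then show "a = b" by (intro poly_mapping_eqI) simp
qed

lemma embed_mono_add: "embed_mono (a + b) = embed_mono a + embed_mono b"
  by (rule poly_mapping_eqI) (auto simp: lookup_add when_def)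

lemma embed_mono_0 [simp]: "embed_mono 0 = 0"
  by (rule poly_mapping_eqI) (auto simp: when_def)

lemma embed_mono_single: "embed_mono (Poly_Mapping.single j c) = Poly_Mapping.single (j, 0) c"
  by (rule poly_mapping_eqI) (auto simp: lookup_single when_def split: if_splits)

lemma range_embed_mono: "mu \<in> range embed_mono \<longleftrightarrow> (\<forall>v\<in>Poly_Mapping.keys mu. snd v = 0)"
proof
  assume "mu \<in> range embed_mono"
  then show "\<forall>v\<in>Poly_Mapping.keys mu. snd v = 0" by (auto simp: in_keys_iff when_def split: if_splits)
next
  assume weight_one: "\<forall>v\<in>Poly_Mapping.keys mu. snd v = 0"
  have inj: "inj (\<lambda>j::nat. (j, 0::nat))" by (auto intro: injI)
  have high: "Poly_Mapping.lookup mu (j, k) = 0" if "k \<noteq> 0" for j k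
    using weight_one that by (metis in_keys_iff snd_conv)
  have "embed_mono (Poly_Mapping.map_key (\<lambda>j. (j, 0)) mu) = mu"
  proof (rule poly_mapping_eqI)
    fix v :: "nat \<times> nat"
    show "Poly_Mapping.lookup (embed_mono (Poly_Mapping.map_key (\<lambda>j. (j, 0)) mu)) v
        = Poly_Mapping.lookup mu v"
      using high by (cases v) (auto simp: map_key.rep_eq[OF inj] when_def)
  qed
  then show "mu \<in> range embed_mono" by (metis rangeI)
qed

lemma add_in_range_embed_mono:
  "a + b \<in> range embed_mono \<longleftrightarrow> a \<in> range embed_mono \<and> b \<in> range embed_mono"
  unfolding range_embed_mono keys_add_monomial by blast

definition c2proj :: "heis \<Rightarrow> nat cpoly" where
  "c2proj = Poly_Mapping.map_key embed_mono"

lemma lookup_c2proj: "Poly_Mapping.lookup (c2proj p) nu = Poly_Mapping.lookup p (embed_mono nu)"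
  by (simp add: c2proj_def map_key.rep_eq[OF inj_embed_mono])

lemma c2proj_0 [simp]: "c2proj 0 = 0"
  by (simp add: c2proj_def map_key_zero[OF inj_embed_mono])

lemma c2proj_add: "c2proj (p + q) = c2proj p + c2proj q"
  by (simp add: c2proj_def map_key_plus[OF inj_embed_mono])

lemma c2proj_diff: "c2proj (p - q) = c2proj p - c2proj q"
  by (rule poly_mapping_eqI) (simp add: lookup_c2proj lookup_minus)

lemma c2proj_sum: "c2proj (sum f S) = (\<Sum>x\<in>S. c2proj (f x))"
  by (induction S rule: infinite_finite_induct) (auto simp: c2proj_add)

lemma c2proj_single_embed_mono:
  "c2proj (Poly_Mapping.single (embed_mono nu) c) = Poly_Mapping.single nu c"
  by (simp add: c2proj_def map_key_single[OF inj_embed_mono])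

lemma c2proj_single_not_embed_mono:
  "mu \<notin> range embed_mono \<Longrightarrow> c2proj (Poly_Mapping.single mu c) = 0"
  by (rule poly_mapping_eqI) (auto simp: lookup_c2proj lookup_single when_def)

lemma c2proj_mult: "c2proj (p * q) = c2proj p * c2proj q"
proof (induction p rule: poly_mapping_single_induct)
  case (single mu c)
  show ?case
  proof (induction q rule: poly_mapping_single_induct)
    case (single mu' c')
    show ?case
    proof (cases "mu \<in> range embed_mono \<and> mu' \<in> range embed_mono")
      case True
      then show ?thesis
        by (auto simp: mult_single c2proj_single_embed_mono simp flip: embed_mono_add)
    next
      case False
      then show ?thesis
        by (auto simp: mult_single c2proj_single_not_embed_mono add_in_range_embed_mono)
    qed
  qed (simp_all add: distrib_left c2proj_add)
qed (simp_all add: distrib_right c2proj_add)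

lemma c2proj_cconst [simp]: "c2proj (cconst c) = cconst c"
  using c2proj_single_embed_mono[of 0 c] by (simp add: cconst_def)

lemma c2proj_1 [simp]: "c2proj 1 = 1"
  using c2proj_cconst[of 1] by simp

lemma c2proj_cconst_mult: "c2proj (cconst c * x) = cconst c * c2proj x"
  by (simp add: c2proj_mult)

lemma c2proj_cvar: "c2proj (cvar (j, k)) = (if k = 0 then cvar j else 0)"
proof (cases "k = 0")
  case True
  then show ?thesis
    using c2proj_single_embed_mono[of "Poly_Mapping.single j 1" 1]
    by (simp add: cvar_def embed_mono_single)
next
  case False
  then have "Poly_Mapping.single (j, k) 1 \<notin> range embed_mono"
    by (simp add: range_embed_mono)
  then show ?thesis using False by (simp add: cvar_def c2proj_single_not_embed_mono)
qed

lemma c2proj_cpderiv: "c2proj (cpderiv (j, 0) p) = cpderiv j (c2proj p)"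
  by (rule poly_mapping_eqI)
    (simp add: lookup_c2proj lookup_cpderiv embed_mono_add embed_mono_single)

lemma c2proj_eq_0_imp_not_embed_mono: "c2proj x = 0 \<Longrightarrow> mu \<in> Poly_Mapping.keys x \<Longrightarrow> mu \<notin> range embed_mono"
  by (auto simp: in_keys_iff lookup_c2proj dest: arg_cong[where f = "\<lambda>p. Poly_Mapping.lookup p _"])

lemma c2proj_image_heis_space: "c2proj ` heis_space N = poly_in {j. j < N}"
proof (intro subset_antisym subsetI)
  fix g assume "g \<in> c2proj ` heis_space N"
  then obtain x where x: "x \<in> heis_space N" and g: "g = c2proj x" by blast
  have "Poly_Mapping.keys nu \<subseteq> {j. j < N}" if "nu \<in> Poly_Mapping.keys g" for nu
  proof
    fix j assume "j \<in> Poly_Mapping.keys nu"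
    then have "(j, 0) \<in> Poly_Mapping.keys (embed_mono nu)" by (simp add: in_keys_iff)
    moreover have "embed_mono nu \<in> Poly_Mapping.keys x"
      using that by (simp add: g in_keys_iff lookup_c2proj)
    moreover have "\<forall>mu\<in>Poly_Mapping.keys x. Poly_Mapping.keys mu \<subseteq> {v. fst v < N}"
      using x by (simp add: heis_space_def poly_in_def)
    ultimately show "j \<in> {j. j < N}" by fastforce
  qed
  then show "g \<in> poly_in {j. j < N}" by (simp add: poly_in_def)
next
  fix g assume g: "g \<in> poly_in {j. j < N}"
  define x where
    "x = (\<Sum>nu\<in>Poly_Mapping.keys g. Poly_Mapping.single (embed_mono nu) (Poly_Mapping.lookup g nu))"
  have "x \<in> heis_space N"
    unfolding x_def heis_space_def
  proof (intro poly_in_sum poly_in_single subsetI)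
    fix nu v assume nu: "nu \<in> Poly_Mapping.keys g" and "v \<in> Poly_Mapping.keys (embed_mono nu)"
    then have "fst v \<in> Poly_Mapping.keys nu"
      by (cases v) (auto simp: in_keys_iff when_def split: if_splits)
    with nu g show "v \<in> {v. fst v < N}" by (auto simp: poly_in_def)
  qed
  moreover have "c2proj x = g"
    by (simp add: x_def c2proj_sum c2proj_single_embed_mono poly_mapping_sum_single)
  ultimately show "g \<in> c2proj ` heis_space N" by blast
qed

section \<open>Modes of the vertex operators\<close>

definition mono_weight :: "('v \<Rightarrow> nat) \<Rightarrow> ('v \<Rightarrow>\<^sub>0 nat) \<Rightarrow> nat" where
  "mono_weight g mu = (\<Sum>v\<in>Poly_Mapping.keys mu. Poly_Mapping.lookup mu v * g v)"

abbreviation mono_deg :: "('v \<Rightarrow>\<^sub>0 nat) \<Rightarrow> nat" where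
  "mono_deg \<equiv> mono_weight (\<lambda>_. 1)"

abbreviation mono_wt :: "((nat \<times> nat) \<Rightarrow>\<^sub>0 nat) \<Rightarrow> nat" where
  "mono_wt \<equiv> mono_weight (\<lambda>v. snd v + 1)"

lemma mono_weight_superset:
  "finite S \<Longrightarrow> Poly_Mapping.keys mu \<subseteq> S \<Longrightarrow> mono_weight g mu = (\<Sum>v\<in>S. Poly_Mapping.lookup mu v * g v)"
  unfolding mono_weight_def by (intro sum.mono_neutral_left) (auto simp: in_keys_iff)

lemma mono_weight_add: "mono_weight g (a + b) = mono_weight g a + mono_weight g b"
proof -
  let ?S = "Poly_Mapping.keys a \<union> Poly_Mapping.keys b"
  have "mono_weight g (a + b) = (\<Sum>v\<in>?S. Poly_Mapping.lookup (a + b) v * g v)"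
    by (rule mono_weight_superset) (simp_all add: keys_add_monomial)
  also have "\<dots> = (\<Sum>v\<in>?S. Poly_Mapping.lookup a v * g v) + (\<Sum>v\<in>?S. Poly_Mapping.lookup b v * g v)"
    by (simp add: lookup_add distrib_right sum.distrib)
  also have "\<dots> = mono_weight g a + mono_weight g b"
    using mono_weight_superset[of ?S a g] mono_weight_superset[of ?S b g] by simp
  finally show ?thesis .
qed

lemma mono_weight_single: "mono_weight g (Poly_Mapping.single v 1) = g v"
  by (simp add: mono_weight_def)

lemma mono_weight_minus_single:
  "v \<in> Poly_Mapping.keys mu \<Longrightarrow> mono_weight g (mu - Poly_Mapping.single v 1) + g v = mono_weight g mu"
  using mono_weight_add[of g "mu - Poly_Mapping.single v 1" "Poly_Mapping.single v 1"]
  by (simp only: monomial_minus_add_single mono_weight_single)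

lemma mono_deg_eq_0: "mono_deg mu = 0 \<Longrightarrow> mu = 0"
  by (simp add: mono_weight_def in_keys_iff poly_mapping_eqI)

lemma some_in_keys: "mono_deg mu = Suc d \<Longrightarrow> (SOME v. v \<in> Poly_Mapping.keys mu) \<in> Poly_Mapping.keys mu"
  by (metis ex_in_conv keys_eq_empty mono_weight_def nat.distinct(1) some_in_eq sum.empty)

lemma mono_deg_minus_single:
  "v \<in> Poly_Mapping.keys mu \<Longrightarrow> mono_deg mu = Suc d \<Longrightarrow> mono_deg (mu - Poly_Mapping.single v 1) = d"
  using mono_weight_minus_single[of v mu "\<lambda>_. 1"] by simp

lemma mono_wt_bound: "\<exists>b. \<forall>nu\<in>Poly_Mapping.keys w. mono_wt nu \<le> b"
  by (rule exI[of _ "\<Sum>nu\<in>Poly_Mapping.keys w. mono_wt nu"]) (auto intro: member_le_sum)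

lemma hmode_0_right [simp]: "hmode j k 0 = 0"
  by (simp add: hmode_def)

lemma hmode_mode_0 [simp]: "hmode j 0 x = 0"
  by (simp add: hmode_def)

lemma hmode_creation: "hmode j (- int (a + 1) - int l) x = cvar (j, a + l) * x"
proof -
  have "nat (- (- int (a + 1) - int l)) = a + l + 1" by (simp add: nat_eq_iff)
  then show ?thesis unfolding hmode_def by simp
qed

lemma hmode_annihilation:
  "1 \<le> l \<Longrightarrow> hmode j (int l) x = cconst (of_nat l) * cpderiv (j, l - 1) x"
  by (simp add: hmode_def)

lemma hmode_in_heis_space: "j < N \<Longrightarrow> w \<in> heis_space N \<Longrightarrow> hmode j k w \<in> heis_space N"
  unfolding hmode_def heis_space_def
  by (auto intro!: poly_in_mult poly_in_cvar poly_in_cpderiv)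

lemma mono_wt_keys_hmode_annihilation:
  assumes "1 \<le> l" and "\<forall>nu\<in>Poly_Mapping.keys w. mono_wt nu \<le> b"
    and "nu \<in> Poly_Mapping.keys (hmode j (int l) w)"
  shows "mono_wt nu + l \<le> b"
proof -
  have "nu \<in> Poly_Mapping.keys (cpderiv (j, l - 1) w)"
    using assms(3) keys_cconst_mult unfolding hmode_annihilation[OF assms(1)] by blast
  then have "nu + Poly_Mapping.single (j, l - 1) 1 \<in> Poly_Mapping.keys w"
    by (rule keys_cpderiv)
  then have "mono_wt (nu + Poly_Mapping.single (j, l - 1) 1) \<le> b"
    using assms(2) by blast
  then have "mono_wt nu + (snd (j, l - 1) + 1) \<le> b"
    by (simp only: mono_weight_add mono_weight_single)
  then show ?thesis
    using assms(1) by simp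
qed

definition monop_term :: "nat \<Rightarrow> nat \<times> nat \<Rightarrow> ((nat \<times> nat) \<Rightarrow>\<^sub>0 nat) \<Rightarrow> int \<Rightarrow> heis \<Rightarrow> nat \<Rightarrow> heis" where
  "monop_term d v mu s w l = cconst (of_nat ((snd v + 1 + l - 1) choose l)) *
     (hmode (fst v) (- int (snd v + 1) - int l)
        (monop_aux d (mu - Poly_Mapping.single v 1) (s + int l) w)
      - cconst ((-1) ^ (snd v + 1)) *
        monop_aux d (mu - Poly_Mapping.single v 1) (s - int (snd v + 1) - int l)
          (hmode (fst v) (int l) w))"

lemma monop_aux_Suc:
  "monop_aux (Suc d) mu s w = fsum (monop_term d (SOME v. v \<in> Poly_Mapping.keys mu) mu s w)"
  by (simp only: monop_aux.simps Let_def monop_term_def[abs_def])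

lemma monop_aux_0_right [simp]: "monop_aux d mu s 0 = 0"
proof (induction d arbitrary: mu s)
  case (Suc d)
  show ?case by (simp add: monop_aux_Suc fsum_def monop_term_def Suc)
qed simp

lemma monop_aux_in_heis_space:
  "mono_deg mu = d \<Longrightarrow> Poly_Mapping.keys mu \<subseteq> {v. fst v < N} \<Longrightarrow> w \<in> heis_space N
     \<Longrightarrow> monop_aux d mu s w \<in> heis_space N"
proof (induction d arbitrary: mu s w)
  case 0
  then show ?case by (simp add: heis_space_def)
next
  case (Suc d)
  define v where "v = (SOME v. v \<in> Poly_Mapping.keys mu)"
  have v: "v \<in> Poly_Mapping.keys mu" unfolding v_def by (rule some_in_keys[OF Suc.prems(1)])
  have deg: "mono_deg (mu - Poly_Mapping.single v 1) = d"
    by (rule mono_deg_minus_single[OF v Suc.prems(1)])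
  have keys: "Poly_Mapping.keys (mu - Poly_Mapping.single v 1) \<subseteq> {v. fst v < N}"
    using keys_minus_single_subset Suc.prems(2) by (rule subset_trans)
  have j: "fst v < N" using Suc.prems(2) v by blast
  have "monop_term d v mu s w l \<in> heis_space N" for l
    unfolding monop_term_def using Suc.IH[OF deg keys] Suc.prems(3) j
    by (auto simp: heis_space_def
        intro!: poly_in_mult poly_in_diff hmode_in_heis_space[unfolded heis_space_def])
  then show ?case
    unfolding monop_aux_Suc v_def[symmetric] fsum_def heis_space_def by (intro poly_in_sum) auto
qed

text \<open>Annihilation modes lower the weight, so high modes of a monomial kill w.\<close>
lemma monop_aux_eq_0_high:
  "mono_deg mu = d \<Longrightarrow> \<forall>nu\<in>Poly_Mapping.keys w. mono_wt nu \<le> b \<Longrightarrow> int (mono_wt mu + b) \<le> s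
     \<Longrightarrow> monop_aux d mu s w = 0"
proof (induction d arbitrary: mu s w b)
  case (Suc d)
  define v where "v = (SOME v. v \<in> Poly_Mapping.keys mu)"
  have v: "v \<in> Poly_Mapping.keys mu" unfolding v_def by (rule some_in_keys[OF Suc.prems(1)])
  have deg: "mono_deg (mu - Poly_Mapping.single v 1) = d"
    by (rule mono_deg_minus_single[OF v Suc.prems(1)])
  have wt: "mono_wt (mu - Poly_Mapping.single v 1) + (snd v + 1) = mono_wt mu"
    by (rule mono_weight_minus_single[OF v])
  have "monop_term d v mu s w l = 0" for l
  proof -
    have creation: "monop_aux d (mu - Poly_Mapping.single v 1) (s + int l) w = 0"
      using Suc.prems wt by (intro Suc.IH[OF deg, of w b]) auto
    have annihilation: "monop_aux d (mu - Poly_Mapping.single v 1) (s - int (snd v + 1) - int l)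
        (hmode (fst v) (int l) w) = 0"
    proof (cases "l = 0")
      case False
      then have l: "1 \<le> l" by simp
      show ?thesis
      proof (cases "hmode (fst v) (int l) w = 0")
        case False
        then obtain nu where "nu \<in> Poly_Mapping.keys (hmode (fst v) (int l) w)" by fastforce
        then have "l \<le> b" using mono_wt_keys_hmode_annihilation[OF l Suc.prems(2)] by fastforce
        show ?thesis
        proof (rule Suc.IH[OF deg])
          show "\<forall>nu\<in>Poly_Mapping.keys (hmode (fst v) (int l) w). mono_wt nu \<le> b - l"
            using mono_wt_keys_hmode_annihilation[OF l Suc.prems(2)] by fastforce
          show "int (mono_wt (mu - Poly_Mapping.single v 1) + (b - l)) \<le> s - int (snd v + 1) - int l"
            using Suc.prems(3) wt \<open>l \<le> b\<close> by simp
        qed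
      qed simp
    qed simp
    show ?thesis unfolding monop_term_def creation annihilation by simp
  qed
  then show ?case unfolding monop_aux_Suc v_def[symmetric] fsum_def by simp
qed simp

lemma finite_monop_term_support:
  assumes deg: "mono_deg (mu - Poly_Mapping.single v 1) = d"
  shows "finite {l. monop_term d v mu s w l \<noteq> 0}"
proof -
  let ?mu' = "mu - Poly_Mapping.single v 1"
  obtain b where b: "\<forall>nu\<in>Poly_Mapping.keys w. mono_wt nu \<le> b" using mono_wt_bound by blast
  define B where "B = mono_wt ?mu' + b + nat (- s)"
  have vanish: "monop_term d v mu s w l = 0" if "B < l" for l
  proof -
    have "monop_aux d ?mu' (s + int l) w = 0"
      using that unfolding B_def by (intro monop_aux_eq_0_high[OF deg b]) auto
    moreover have "hmode (fst v) (int l) w = 0"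
      using mono_wt_keys_hmode_annihilation[of l w b _ "fst v"] b that unfolding B_def by fastforce
    ultimately show ?thesis by (simp add: monop_term_def)
  qed
  have "{l. monop_term d v mu s w l \<noteq> 0} \<subseteq> {..B}"
  proof
    fix l assume "l \<in> {l. monop_term d v mu s w l \<noteq> 0}"
    then have "\<not> B < l" using vanish by blast
    then show "l \<in> {..B}" by simp
  qed
  then show ?thesis by (rule finite_subset) simp
qed

lemma c2proj_fsum_concentrated:
  assumes "finite {l. f l \<noteq> 0}" and "\<And>l. l \<noteq> 0 \<Longrightarrow> c2proj (f l) = 0"
  shows "c2proj (fsum f) = c2proj (f 0)"
proof -
  have "c2proj (fsum f) = (\<Sum>l\<in>{l. f l \<noteq> 0}. if l = 0 then c2proj (f 0) else 0)"
    unfolding fsum_def c2proj_sum using assms(2) by (intro sum.cong) auto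
  then show ?thesis using assms(1) by auto
qed

lemma c2proj_monop_aux_eq_0:
  "s \<le> -2 \<or> s = 0 \<Longrightarrow> c2proj (monop_aux d mu s w) = 0"
proof (induction d arbitrary: mu s w)
  case (Suc d)
  define v where "v = (SOME v. v \<in> Poly_Mapping.keys mu)"
  have "c2proj (monop_term d v mu s w l) = 0" for l
  proof -
    have creation: "c2proj (hmode (fst v) (- int (snd v + 1) - int l)
        (monop_aux d (mu - Poly_Mapping.single v 1) (s + int l) w)) = 0"
      unfolding hmode_creation c2proj_mult c2proj_cvar using Suc by (cases "snd v + l = 0") auto
    have annihilation: "c2proj (monop_aux d (mu - Poly_Mapping.single v 1) (s - int (snd v + 1) - int l)
        (hmode (fst v) (int l) w)) = 0"
    proof (cases "l = 0")
      case False
      then show ?thesis using Suc.prems by (intro Suc.IH) auto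
    qed simp
    show ?thesis
      unfolding monop_term_def c2proj_cconst_mult c2proj_diff creation annihilation by simp
  qed
  then show ?case
    unfolding monop_aux_Suc v_def[symmetric] fsum_def c2proj_sum by simp
qed auto

text \<open>Only the l = 0 summand of the normal ordered product survives the projection.\<close>
lemma c2proj_monop_aux_minus_one:
  "mono_deg mu = d \<Longrightarrow> c2proj (monop_aux d mu (-1) w) = c2proj (Poly_Mapping.single mu 1) * c2proj w"
proof (induction d arbitrary: mu w)
  case 0
  then have "mu = 0" by (intro mono_deg_eq_0)
  then show ?case by simp
next
  case (Suc d)
  define v where "v = (SOME v. v \<in> Poly_Mapping.keys mu)"
  let ?mu' = "mu - Poly_Mapping.single v 1"
  have v: "v \<in> Poly_Mapping.keys mu" unfolding v_def by (rule some_in_keys[OF Suc.prems])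
  have deg: "mono_deg ?mu' = d" by (rule mono_deg_minus_single[OF v Suc.prems])
  have finite: "finite {l. monop_term d v mu (-1) w l \<noteq> 0}"
    by (rule finite_monop_term_support[OF deg])
  have high: "c2proj (monop_term d v mu (-1) w l) = 0" if "l \<noteq> 0" for l
    using that unfolding monop_term_def c2proj_cconst_mult c2proj_diff hmode_creation
    by (simp add: c2proj_mult c2proj_cvar c2proj_monop_aux_eq_0)
  have "c2proj (monop_aux (Suc d) mu (-1) w) = c2proj (monop_term d v mu (-1) w 0)"
    unfolding monop_aux_Suc v_def[symmetric] by (rule c2proj_fsum_concentrated[OF finite high])
  also have "monop_term d v mu (-1) w 0 = cvar v * monop_aux d ?mu' (-1) w"
    unfolding monop_term_def hmode_creation by simp
  also have "c2proj \<dots> = c2proj (cvar v) * (c2proj (Poly_Mapping.single ?mu' 1) * c2proj w)"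
    by (simp only: c2proj_mult Suc.IH[OF deg])
  also have "\<dots> = c2proj (Poly_Mapping.single ?mu' 1 * cvar v) * c2proj w"
    by (simp only: c2proj_mult mult_ac)
  also have "Poly_Mapping.single ?mu' 1 * cvar v = Poly_Mapping.single mu (1::complex)"
    unfolding cvar_def mult_single monomial_minus_add_single[OF v] by simp
  finally show ?case .
qed

lemma monop_eq_monop_aux: "monop mu = monop_aux (mono_deg mu) mu"
  by (simp add: monop_def mono_weight_def)

lemma vop_in_heis_space:
  assumes "u \<in> heis_space N" and w: "w \<in> heis_space N"
  shows "vop u s w \<in> heis_space N"
proof -
  have "monop mu s w \<in> heis_space N" if "mu \<in> Poly_Mapping.keys u" for mu
    unfolding monop_eq_monop_aux using assms(1) that
    by (intro monop_aux_in_heis_space[OF refl _ w]) (auto simp: heis_space_def poly_in_def)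
  then show ?thesis
    unfolding vop_def heis_space_def by (intro poly_in_sum poly_in_mult poly_in_cconst) auto
qed

lemma c2proj_vop_eq_0: "s \<le> -2 \<or> s = 0 \<Longrightarrow> c2proj (vop u s w) = 0"
  by (simp add: vop_def c2proj_sum c2proj_cconst_mult monop_eq_monop_aux c2proj_monop_aux_eq_0)

lemma c2proj_vop_minus_one: "c2proj (vop u (-1) w) = c2proj u * c2proj w"
proof -
  have "c2proj (vop u (-1) w)
      = (\<Sum>mu\<in>Poly_Mapping.keys u.
           c2proj (cconst (Poly_Mapping.lookup u mu) * Poly_Mapping.single mu 1)) * c2proj w"
    by (simp add: vop_def c2proj_sum c2proj_mult monop_eq_monop_aux c2proj_monop_aux_minus_one
        sum_distrib_right mult.assoc)
  also have "\<dots> = c2proj u * c2proj w"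
    by (simp add: cconst_mult_single poly_mapping_sum_single flip: c2proj_sum)
  finally show ?thesis .
qed

lemma vop_cvar_minus_two: "vop (cvar (j, k)) (-2) w = cconst (of_nat (Suc k)) * (cvar (j, Suc k) * w)"
proof -
  let ?v = "(j, k)"
  have deg: "mono_deg (Poly_Mapping.single ?v 1) = Suc 0" by (simp add: mono_weight_def)
  have key: "(SOME v. v \<in> Poly_Mapping.keys (Poly_Mapping.single ?v (1::nat))) = ?v" by simp
  have summand: "monop_term 0 ?v (Poly_Mapping.single ?v 1) (-2) w l
      = (if l = 1 then cconst (of_nat (Suc k)) * (cvar (j, Suc k) * w) else 0)" for l
    unfolding monop_term_def hmode_creation by simp
  have "vop (cvar ?v) (-2) w = monop (Poly_Mapping.single ?v 1) (-2) w"
    by (simp add: vop_def cvar_def)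
  also have "\<dots> = fsum (\<lambda>l. if l = 1 then cconst (of_nat (Suc k)) * (cvar (j, Suc k) * w) else 0)"
    unfolding monop_eq_monop_aux deg monop_aux_Suc key summand ..
  also have "\<dots> = cconst (of_nat (Suc k)) * (cvar (j, Suc k) * w)"
    by (simp add: fsum_def)
  finally show ?thesis .
qed

section \<open>C_2 as the kernel of the projection\<close>

lemma c2proj_C2: "x \<in> C2 N \<Longrightarrow> c2proj x = 0"
  unfolding C2_def by (auto simp: c2proj_sum c2proj_cconst_mult c2proj_vop_eq_0)

text \<open>A monomial containing some h_j(-(k+2)) is, up to a scalar, h_j(-(k+1))1 applied in mode -2
  to the rest of the monomial.\<close>
lemma single_eq_vop_minus_two:
  assumes keys: "Poly_Mapping.keys mu \<subseteq> {v. fst v < N}" and high: "mu \<notin> range embed_mono"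
  obtains u w c' where "u \<in> heis_space N" "w \<in> heis_space N"
    "Poly_Mapping.single mu c = cconst c' * vop u (-2) w"
proof -
  obtain j k where v: "(j, Suc k) \<in> Poly_Mapping.keys mu"
    using high unfolding range_embed_mono by (metis not0_implies_Suc prod.collapse)
  define w where "w = Poly_Mapping.single (mu - Poly_Mapping.single (j, Suc k) 1) (1::complex)"
  have "cvar (j, k) \<in> heis_space N"
    unfolding heis_space_def using keys v by (intro poly_in_cvar) auto
  moreover have "w \<in> heis_space N"
    unfolding heis_space_def w_def using keys_minus_single_subset keys
    by (intro poly_in_single) (rule subset_trans)
  moreover have "Poly_Mapping.single mu c = cconst (c / of_nat (Suc k)) * vop (cvar (j, k)) (-2) w"
  proof -
    have prod: "cvar (j, Suc k) * w = Poly_Mapping.single mu 1"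
      unfolding w_def cvar_def mult_single using monomial_minus_add_single[OF v]
      by (simp add: add.commute)
    show ?thesis
      unfolding vop_cvar_minus_two prod mult.assoc[symmetric] cconst_mult_single
      by (simp del: of_nat_Suc)
  qed
  ultimately show ?thesis using that by blast
qed

lemma C2_of_c2proj_eq_0:
  assumes x: "x \<in> heis_space N" and kernel: "c2proj x = 0"
  shows "x \<in> C2 N"
proof -
  have "\<forall>mu\<in>Poly_Mapping.keys x. \<exists>u w c'. u \<in> heis_space N \<and> w \<in> heis_space N
      \<and> Poly_Mapping.single mu (Poly_Mapping.lookup x mu) = cconst c' * vop u (-2) w"
  proof
    fix mu assume mu: "mu \<in> Poly_Mapping.keys x"
    have "Poly_Mapping.keys mu \<subseteq> {v. fst v < N}"
      using x mu unfolding heis_space_def poly_in_def by blast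
    then show "\<exists>u w c'. u \<in> heis_space N \<and> w \<in> heis_space N
        \<and> Poly_Mapping.single mu (Poly_Mapping.lookup x mu) = cconst c' * vop u (-2) w"
      by (rule single_eq_vop_minus_two[OF _ c2proj_eq_0_imp_not_embed_mono[OF kernel mu]]) blast
  qed
  then obtain u w c where uwc: "\<And>mu. mu \<in> Poly_Mapping.keys x \<Longrightarrow>
      u mu \<in> heis_space N \<and> w mu \<in> heis_space N
      \<and> Poly_Mapping.single mu (Poly_Mapping.lookup x mu) = cconst (c mu) * vop (u mu) (-2) (w mu)"
    by metis
  obtain h where h: "bij_betw h {..<card (Poly_Mapping.keys x)} (Poly_Mapping.keys x)"
    using ex_bij_betw_nat_finite[of "Poly_Mapping.keys x"] by (auto simp: atLeast0LessThan)
  have "x = (\<Sum>mu\<in>Poly_Mapping.keys x. Poly_Mapping.single mu (Poly_Mapping.lookup x mu))"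
    by (simp add: poly_mapping_sum_single)
  also have "\<dots> = (\<Sum>l<card (Poly_Mapping.keys x). cconst (c (h l)) * vop (u (h l)) (-2) (w (h l)))"
    using uwc bij_betwE[OF h] by (simp add: sum.reindex_bij_betw[OF h, symmetric])
  finally show ?thesis
    unfolding C2_def mem_Collect_eq using uwc bij_betwE[OF h]
    by (intro exI[of _ "card (Poly_Mapping.keys x)"] exI[of _ "\<lambda>l. c (h l)"]
        exI[of _ "\<lambda>l. u (h l)"] exI[of _ "\<lambda>l. w (h l)"] conjI) auto
qed

section \<open>The subspace W as a preimage\<close>

lemma c2proj_fmap:
  "c2proj (fmap n i a) = cpderiv (xvar n i) (c2proj a) - cvar (zetavar n i) * c2proj a"
proof -
  have "hmode j 1 a = cpderiv (j, 0) a" "hmode j (-1) a = cvar (j, 0) * a" for j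
    by (simp_all add: hmode_def)
  then show ?thesis
    by (simp add: fmap_def xvar_def zetavar_def c2proj_diff c2proj_cpderiv c2proj_mult c2proj_cvar)
qed

lemma fmap_in_heis_space:
  assumes "a \<in> heis_space (2 * n)" and "1 \<le> i" and "i \<le> n"
  shows "fmap n i a \<in> heis_space (2 * n)"
  using assms unfolding fmap_def beta_idx_def alpha_idx_def heis_space_def
  by (intro poly_in_diff hmode_in_heis_space[unfolded heis_space_def]) auto

lemma c2proj_image_Mone: "c2proj ` Mone n = Apoly n"
  by (simp add: Mone_def Apoly_def c2proj_image_heis_space)

lemma c2proj_Wsub: "x \<in> Wsub n k \<Longrightarrow> c2proj x \<in> Usub n k"
proof -
  assume "x \<in> Wsub n k"
  then obtain a c where xac: "x = (\<Sum>i\<in>{1..k}. fmap n i (a i)) + c"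
    and a: "\<forall>i\<in>{1..k}. a i \<in> Mone n" and c: "c \<in> C2 (2 * n)"
    unfolding Wsub_def by blast
  have "c2proj x = (\<Sum>i\<in>{1..k}. cpderiv (xvar n i) (c2proj (a i)) - cvar (zetavar n i) * c2proj (a i))"
    by (simp add: xac c2proj_add c2proj_sum c2proj_fmap c2proj_C2[OF c])
  moreover have "\<forall>i\<in>{1..k}. c2proj (a i) \<in> Apoly n"
    using a c2proj_image_Mone by blast
  ultimately show "c2proj x \<in> Usub n k"
    unfolding Usub_def mem_Collect_eq by (intro exI[of _ "\<lambda>i. c2proj (a i)"] conjI)
qed

lemma Wsub_of_c2proj_Usub:
  assumes "k \<le> n" and x: "x \<in> Mone n" and "c2proj x \<in> Usub n k"
  shows "x \<in> Wsub n k"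
proof -
  obtain g where x_g: "c2proj x = (\<Sum>i\<in>{1..k}. cpderiv (xvar n i) (g i) - cvar (zetavar n i) * g i)"
    and g: "\<forall>i\<in>{1..k}. g i \<in> Apoly n"
    using assms(3) unfolding Usub_def by blast
  have "\<forall>i\<in>{1..k}. \<exists>a. a \<in> Mone n \<and> c2proj a = g i"
    using g by (metis c2proj_image_Mone imageE)
  then obtain a where a: "\<forall>i\<in>{1..k}. a i \<in> Mone n \<and> c2proj (a i) = g i"
    by (metis bchoice)
  define c where "c = x - (\<Sum>i\<in>{1..k}. fmap n i (a i))"
  have "(\<Sum>i\<in>{1..k}. fmap n i (a i)) \<in> heis_space (2 * n)"
    using a assms(1) unfolding Mone_def heis_space_def
    by (intro poly_in_sum fmap_in_heis_space[unfolded heis_space_def]) auto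
  then have "c \<in> heis_space (2 * n)"
    using x unfolding c_def Mone_def heis_space_def by (rule poly_in_diff[rotated])
  moreover have "c2proj c = 0"
    using a by (simp add: c_def c2proj_diff c2proj_sum c2proj_fmap x_g)
  ultimately have "c \<in> C2 (2 * n)" by (rule C2_of_c2proj_eq_0)
  then show "x \<in> Wsub n k"
    unfolding Wsub_def mem_Collect_eq using a
    by (intro exI[of _ a] exI[of _ c] conjI) (auto simp: c_def)
qed

theorem mainTheorem14:
  fixes n k :: nat
  assumes "1 \<le> n" and "1 \<le> k" and "k \<le> n"
  shows "MZ01_subspace (Mone n) (Wsub n k) \<longleftrightarrow> MZ_subspace (Apoly n) (Usub n k)"
proof -
  interpret multiplicative_projection "Mone n" "Apoly n" c2proj
    by unfold_locales (simp_all add: c2proj_image_Mone c2proj_vop_minus_one c2proj_vop_eq_0,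
        auto simp: Mone_def Apoly_def vop_in_heis_space)
  have "\<And>x. x \<in> Mone n \<Longrightarrow> x \<in> Wsub n k \<longleftrightarrow> c2proj x \<in> Usub n k"
    using c2proj_Wsub Wsub_of_c2proj_Usub[OF assms(3)] by blast
  moreover have "0 \<in> Usub n k"
    unfolding Usub_def Apoly_def by (auto intro!: exI[of _ "\<lambda>_. 0"])
  ultimately show ?thesis by (rule MZ01_subspace_iff_MZ_subspace)
qed

end
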